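(* Let $m\ge 2$ be an integer. Then, as formal power series in $q$ (equivalently, for $|q|<1$), $$\sum_{n=1}^\infty \frac{q^n\left(1-q^{(m-1)n}\right)(q^{mn};q^m)_\infty}{(1-q^n)\,(q^{n+1};q)_{(m-1)n}\,(q^{mn};q)_\infty} = -1 + \frac{(q^m;q^m)_\infty}{(q;q)_\infty}.$$
   Context: Standard $q$-Pochhammer notation: $(a;q)_n=(1-a)(1-aq)\cdots(1-aq^{n-1})$ and $(a;q)_\infty=\prod_{k=0}^\infty(1-aq^k)$. *)

theory Defs
  imports "HOL-Analysis.Analysis"
begin

definition qpoch :: "complex \<Rightarrow> complex \<Rightarrow> nat \<Rightarrow> complex" where
  "qpoch a q n = (\<Prod>k<n. (1 - a * q ^ k))"

definition qpoch_inf :: "complex \<Rightarrow> complex \<Rightarrow> complex" where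
  "qpoch_inf a q = (\<Prod>k. (1 - a * q ^ k))"

end

theory Submission
  imports Defs
begin

text \<open>Put \<open>R n = (q^(mn); q^m)\<^sub>\<infinity> / (q^n; q)\<^sub>\<infinity>\<close>. The \<open>n\<close>-th summand equals
  \<open>R n - R (n + 1)\<close>: splitting off the factor \<open>1 - q^(mn)\<close> of the numerator and \<open>1 - q^n\<close> of
  \<open>(q^n; q)\<^sub>\<infinity>\<close> relates \<open>R n\<close> to \<open>R (n + 1)\<close>, while the finite product in the summand glues
  \<open>(q^(mn); q)\<^sub>\<infinity>\<close> back to \<open>(q^n; q)\<^sub>\<infinity>\<close>. So the series telescopes to \<open>R 1 - lim R\<close>, and the
  limit is 1 because tails of convergent products tend to 1.\<close>

lemma qpoch_factor_nonzero:
  fixes a q :: complex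
  assumes "norm a < 1" "norm q \<le> 1"
  shows "1 - a * q ^ k \<noteq> 0"
proof
  assume "1 - a * q ^ k = 0"
  then have "norm (a * q ^ k) = 1" by (simp add: right_minus_eq)
  moreover have "norm (a * q ^ k) < 1"
    using assms mult_left_le[of "norm q ^ k" "norm a"] power_le_one[of "norm q" k]
    by (simp add: norm_mult norm_power)
  ultimately show False by simp
qed

lemma qpoch_nonzero:
  fixes a q :: complex
  assumes "norm a < 1" "norm q \<le> 1"
  shows "qpoch a q n \<noteq> 0"
  unfolding qpoch_def using qpoch_factor_nonzero[OF assms] by simp

lemma qpoch_inf_convergent:
  fixes a q :: complex
  assumes "norm q < 1"
  shows "convergent_prod (\<lambda>k. 1 - a * q ^ k)"
proof -
  have "summable (\<lambda>k. norm a * norm q ^ k)"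
    using assms by (simp add: summable_mult summable_geometric)
  then have "summable (\<lambda>k. norm ((1 - a * q ^ k) - 1))"
    by (simp add: norm_mult norm_power)
  then show ?thesis
    by (intro abs_convergent_prod_imp_convergent_prod summable_imp_abs_convergent_prod)
qed

lemma qpoch_inf_nonzero:
  fixes a q :: complex
  assumes "norm a < 1" "norm q < 1"
  shows "qpoch_inf a q \<noteq> 0"
  unfolding qpoch_inf_def
  using assms by (intro prodinf_nonzero qpoch_inf_convergent qpoch_factor_nonzero) auto

lemma qpoch_inf_split:
  fixes a q :: complex
  assumes "norm q < 1"
  shows "qpoch_inf a q = qpoch a q n * qpoch_inf (a * q ^ n) q"
proof -
  have "(\<lambda>k. 1 - a * q ^ k) has_prod (qpoch a q n * (\<Prod>k. 1 - a * q ^ (k + n)))"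
    unfolding qpoch_def
    by (rule has_prod_ignore_initial_segment'[OF qpoch_inf_convergent[OF assms]])
  then show ?thesis
    unfolding qpoch_inf_def by (simp add: has_prod_iff power_add mult_ac)
qed

lemma qpoch_inf_head:
  fixes a q :: complex
  assumes "norm q < 1"
  shows "qpoch_inf a q = (1 - a) * qpoch_inf (a * q) q"
  using qpoch_inf_split[OF assms, of a 1] by (simp add: qpoch_def)

lemma qpoch_inf_tail_tendsto:
  fixes a q :: complex
  assumes "norm a < 1" "norm q < 1"
  shows "(\<lambda>n. qpoch_inf (a * q ^ n) q) \<longlonglongrightarrow> 1"
proof -
  have "(\<lambda>n. qpoch a q n) \<longlonglongrightarrow> qpoch_inf a q"
    using convergent_prod_LIMSEQ[OF qpoch_inf_convergent[OF assms(2)]]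
    unfolding qpoch_def qpoch_inf_def by (simp add: LIMSEQ_lessThan_iff_atMost)
  then have "(\<lambda>n. qpoch_inf a q / qpoch a q n) \<longlonglongrightarrow> qpoch_inf a q / qpoch_inf a q"
    using qpoch_inf_nonzero[OF assms] by (intro tendsto_intros) auto
  moreover have "qpoch_inf (a * q ^ n) q = qpoch_inf a q / qpoch a q n" for n
    using qpoch_inf_split[OF assms(2), of a n] qpoch_nonzero[of a q n] assms
    by (simp add: nonzero_eq_divide_eq mult.commute)
  ultimately show ?thesis
    using qpoch_inf_nonzero[OF assms] by simp
qed

lemma qpoch_inf_glue:
  fixes a q :: complex
  assumes "norm q < 1"
  shows "(1 - a) * qpoch (a * q) q d * qpoch_inf (a * q ^ d) q = (1 - a * q ^ d) * qpoch_inf a q"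
proof -
  have "(1 - a) * qpoch (a * q) q d = qpoch a q (Suc d)"
    unfolding qpoch_def prod.lessThan_Suc_shift by (simp add: mult_ac)
  also have "\<dots> = (1 - a * q ^ d) * qpoch a q d"
    unfolding qpoch_def by simp
  finally show ?thesis
    using qpoch_inf_split[OF assms, of a d] by (simp add: mult_ac)
qed

lemma corollary7_summand_eq_diff:
  fixes q :: complex and m n :: nat
  assumes "norm q < 1" "m \<ge> 1" "n > 0"
  defines "R \<equiv> \<lambda>n. qpoch_inf (q ^ (m * n)) (q ^ m) / qpoch_inf (q ^ n) q"
  shows "q ^ n * (1 - q ^ ((m - 1) * n)) * qpoch_inf (q ^ (m * n)) (q ^ m)
           / ((1 - q ^ n) * qpoch (q ^ (n + 1)) q ((m - 1) * n) * qpoch_inf (q ^ (m * n)) q)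
         = R n - R (Suc n)"
proof -
  define d where "d = (m - 1) * n"
  have mn: "q ^ (m * n) = q ^ n * q ^ d"
    using assms(2) by (simp add: d_def diff_mult_distrib power_add[symmetric])
  have qn: "norm (q ^ n) < 1" and qmn: "norm (q ^ (m * n)) < 1"
    using assms by (simp_all add: norm_power power_less_one_iff)
  define X where "X = qpoch_inf (q ^ (m * Suc n)) (q ^ m)"
  define Y where "Y = qpoch_inf (q ^ Suc n) q"
  have num: "qpoch_inf (q ^ (m * n)) (q ^ m) = (1 - q ^ (m * n)) * X"
    unfolding X_def using qpoch_inf_head[of "q ^ m" "q ^ (m * n)"] assms(1,2)
    by (simp add: norm_power power_less_one_iff power_add mult.commute)
  have Y: "qpoch_inf (q ^ n) q = (1 - q ^ n) * Y"
    unfolding Y_def using qpoch_inf_head[OF assms(1), of "q ^ n"] by (simp add: mult.commute)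
  have den: "(1 - q ^ n) * qpoch (q ^ (n + 1)) q d * qpoch_inf (q ^ (m * n)) q
      = (1 - q ^ (m * n)) * (1 - q ^ n) * Y"
    using qpoch_inf_glue[OF assms(1), of "q ^ n" d] by (simp add: mn Y mult_ac)
  have "Y \<noteq> 0"
    unfolding Y_def using assms(1)
    by (intro qpoch_inf_nonzero) (simp_all add: norm_power power_less_one_iff del: power_Suc)
  moreover have "1 - q ^ n \<noteq> 0" "1 - q ^ (m * n) \<noteq> 0"
    using qpoch_factor_nonzero[OF qn, of 1 0] qpoch_factor_nonzero[OF qmn, of 1 0] by simp_all
  ultimately have "(q ^ n - q ^ (m * n)) * ((1 - q ^ (m * n)) * X) / ((1 - q ^ (m * n)) * (1 - q ^ n) * Y)
      = (1 - q ^ (m * n)) * X / ((1 - q ^ n) * Y) - X / Y"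
    by (simp add: divide_simps) algebra
  moreover have "q ^ n * (1 - q ^ d) = q ^ n - q ^ (m * n)"
    by (simp add: mn algebra_simps)
  ultimately show ?thesis
    unfolding R_def d_def[symmetric] den num Y X_def[symmetric] Y_def[symmetric] by simp
qed

theorem corollary7:
  fixes m :: nat and q :: complex
  assumes "m \<ge> 2" and "norm q < 1"
  shows "(\<lambda>i. let n = Suc i in
            q ^ n * (1 - q ^ ((m - 1) * n)) * qpoch_inf (q ^ (m * n)) (q ^ m)
            / ((1 - q ^ n) * qpoch (q ^ (n + 1)) q ((m - 1) * n) * qpoch_inf (q ^ (m * n)) q))
         sums (-1 + qpoch_inf (q ^ m) (q ^ m) / qpoch_inf q q)"
proof -
  define R where "R n = qpoch_inf (q ^ (m * n)) (q ^ m) / qpoch_inf (q ^ n) q" for n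
  have qm: "norm (q ^ m) < 1"
    using assms by (simp add: norm_power power_less_one_iff)
  have "R (Suc i) = qpoch_inf (q ^ m * (q ^ m) ^ i) (q ^ m) / qpoch_inf (q * q ^ i) q" for i
    by (simp add: R_def power_mult[symmetric] power_add mult.commute)
  then have "(\<lambda>i. R (Suc i)) \<longlonglongrightarrow> 1 / 1"
    using qpoch_inf_tail_tendsto[OF qm qm] qpoch_inf_tail_tendsto[OF assms(2) assms(2)]
    by (simp only:) (intro tendsto_divide; simp)
  then have "(\<lambda>i. R (Suc i) - R (Suc (Suc i))) sums (R 1 - 1)"
    using telescope_sums' by fastforce
  moreover have "R 1 - 1 = -1 + qpoch_inf (q ^ m) (q ^ m) / qpoch_inf q q"
    by (simp add: R_def)
  moreover have "(let n = Suc i in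
            q ^ n * (1 - q ^ ((m - 1) * n)) * qpoch_inf (q ^ (m * n)) (q ^ m)
            / ((1 - q ^ n) * qpoch (q ^ (n + 1)) q ((m - 1) * n) * qpoch_inf (q ^ (m * n)) q))
      = R (Suc i) - R (Suc (Suc i))" for i
    unfolding Let_def R_def by (rule corollary7_summand_eq_diff) (use assms in auto)
  ultimately show ?thesis
    by simp
qed

end
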